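(* Let $\mathbf{Q}=\begin{pmatrix} Q_{11} & Q_{12}\\ Q_{12} & Q_{22}\end{pmatrix}$ be a real symmetric positive definite $2\times 2$ matrix (the quantum Fisher information matrix of a two-parameter model with parameters $\lambda_1,\lambda_2$). Define the joint-estimation quantity $$\mu=\operatorname{Tr}[\mathbf{Q}^{-1}]=\frac{Q_{11}+Q_{22}}{Q_{11}Q_{22}-Q_{12}^2},$$ and, for $\gamma\in(0,1)$, the stepwise-estimation quantities $$\mu'(\gamma)=\frac{\operatorname{Tr}[\mathbf{W}_1\mathbf{Q}^{-1}]}{\gamma}+\frac{1}{(1-\gamma)Q_{22}}=\frac{Q_{22}}{\gamma\,(Q_{11}Q_{22}-Q_{12}^2)}+\frac{1}{(1-\gamma)Q_{22}},$$ $$\mu''(\gamma)=\frac{\operatorname{Tr}[\mathbf{W}_2\mathbf{Q}^{-1}]}{\gamma}+\frac{1}{(1-\gamma)Q_{11}}=\frac{Q_{11}}{\gamma\,(Q_{11}Q_{22}-Q_{12}^2)}+\frac{1}{(1-\gamma)Q_{11}},$$ where $\mathbf{W}_1=\operatorname{diag}(1,0)$ and $\mathbf{W}_2=\operatorname{diag}(0,1)$. If $$\frac{Q_{12}^2}{Q_{11}Q_{22}}>2\sqrt{2}-2,$$ then there exists $\gamma\in(0,1)$ such that $\min\big(\mu'(\gamma),\mu''(\gamma)\big)<\mu$; equivalently, $\tilde{\mu}:=\inf_{\gamma\in(0,1)}\min\big(\mu'(\gamma),\mu''(\gamma)\big)<\mu$.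
   Context: Interpretation: for $M$ measurement rounds, $\mu/M$ is the multiparameter quantum Cramér–Rao lower bound on $\Delta^2_{\hat\Lambda_1}+\Delta^2_{\hat\Lambda_2}$ for joint estimation of both parameters, while $\mu'(\gamma)/M$ (resp. $\mu''(\gamma)/M$) is the corresponding lower bound for the stepwise scheme that spends $\gamma M$ rounds estimating $\lambda_1$ (resp. $\lambda_2$) first and the remaining $(1-\gamma)M$ rounds estimating the other parameter as a single-parameter problem (with the first parameter's estimate replaced by its true value, as in the asymptotic limit). "Stepwise estimation outperforms joint estimation" means $\tilde\mu<\mu$. *)

theory Defs
  imports "HOL-Analysis.Analysis"
begin

definition pos_def_mat :: "real^2^2 \<Rightarrow> bool" where
  "pos_def_mat Q \<longleftrightarrow> (\<forall>x. x \<noteq> 0 \<longrightarrow> x \<bullet> (Q *v x) > 0)"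

definition W1 :: "real^2^2" where
  "W1 = (\<chi> i j. if i = 1 \<and> j = 1 then 1 else 0)"

definition W2 :: "real^2^2" where
  "W2 = (\<chi> i j. if i = 2 \<and> j = 2 then 1 else 0)"

definition mu_joint :: "real^2^2 \<Rightarrow> real" where
  "mu_joint Q = trace (matrix_inv Q)"

definition mu1 :: "real^2^2 \<Rightarrow> real \<Rightarrow> real" where
  "mu1 Q \<gamma> = trace (W1 ** matrix_inv Q) / \<gamma> + 1 / ((1 - \<gamma>) * Q $ 2 $ 2)"

definition mu2 :: "real^2^2 \<Rightarrow> real \<Rightarrow> real" where
  "mu2 Q \<gamma> = trace (W2 ** matrix_inv Q) / \<gamma> + 1 / ((1 - \<gamma>) * Q $ 1 $ 1)"

end

theory Submission
  imports Defs
begin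

text \<open>Write \<open>a = Q\<^sub>1\<^sub>1\<close>, \<open>b = Q\<^sub>2\<^sub>2\<close>, \<open>c = Q\<^sub>1\<^sub>2\<close>, \<open>d = det Q = a b - c\<^sup>2\<close> and \<open>r = c\<^sup>2 / (a b)\<close>.
  The stepwise quantity has the form \<open>p/\<gamma> + q/(1 - \<gamma>)\<close>, whose infimum over \<open>\<gamma>\<close> is
  \<open>(\<surd>p + \<surd>q)\<^sup>2\<close>; for \<open>\<mu>'\<close> this infimum lies below \<open>\<mu> = (a + b)/d\<close> as soon as
  \<open>2 b \<surd>d < c\<^sup>2\<close>, and symmetrically for \<open>\<mu>''\<close> with \<open>a\<close> in place of \<open>b\<close>.
  Since \<open>min a b \<le> \<surd>(a b)\<close> and \<open>\<surd>d = \<surd>(a b) \<surd>(1 - r)\<close>, it suffices that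
  \<open>2 \<surd>(1 - r) < r\<close>, i.e. \<open>r\<^sup>2 + 4 r - 4 > 0\<close>, which is exactly \<open>r > 2\<surd>2 - 2\<close>.\<close>

lemma ex_inverse_weighted_sum_less:
  fixes p q m :: real
  assumes "p > 0" "q > 0" "p + q + 2 * sqrt (p * q) < m"
  shows "\<exists>\<gamma>. 0 < \<gamma> \<and> \<gamma> < 1 \<and> p / \<gamma> + q / (1 - \<gamma>) < m"
proof -
  define u v where "u = sqrt p" and "v = sqrt q"
  have "u > 0" "v > 0" "p = u\<^sup>2" "q = v\<^sup>2"
    using assms(1,2) by (simp_all add: u_def v_def)
  define \<gamma> where "\<gamma> = u / (u + v)"
  have "1 - \<gamma> = v / (u + v)"
    using \<open>u > 0\<close> \<open>v > 0\<close> by (simp add: \<gamma>_def field_simps)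
  then have "p / \<gamma> + q / (1 - \<gamma>) = p + q + 2 * sqrt (p * q)"
    using \<open>u > 0\<close> \<open>v > 0\<close> \<open>p = u\<^sup>2\<close> \<open>q = v\<^sup>2\<close>
    by (simp add: \<gamma>_def real_sqrt_mult u_def[symmetric] v_def[symmetric] field_simps power2_eq_square)
  moreover have "0 < \<gamma>" "\<gamma> < 1"
    using \<open>u > 0\<close> \<open>v > 0\<close> by (simp_all add: \<gamma>_def)
  ultimately show ?thesis
    using assms(3) by metis
qed

lemma ex_stepwise_less_joint:
  fixes a b d :: real
  assumes "b > 0" "d > 0" "2 * b * sqrt d < a * b - d"
  shows "\<exists>\<gamma>. 0 < \<gamma> \<and> \<gamma> < 1 \<and> b / (\<gamma> * d) + 1 / ((1 - \<gamma>) * b) < (a + b) / d"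
proof -
  have "sqrt (b / d * (1 / b)) = sqrt d / d"
    using assms(1,2) by (simp add: real_sqrt_divide divide_simps)
  moreover have "b / d + 1 / b + 2 * (sqrt d / d) < (a + b) / d"
  proof -
    have "d * (d + 2 * b * sqrt d) < d * (a * b)"
      using assms by (intro mult_strict_left_mono) auto
    then show ?thesis
      using assms(1,2) by (simp add: field_simps)
  qed
  ultimately have "b / d + 1 / b + 2 * sqrt (b / d * (1 / b)) < (a + b) / d"
    by simp
  from ex_inverse_weighted_sum_less[OF _ _ this] show ?thesis
    using assms(1,2) by (simp add: divide_divide_eq_left mult.commute)
qed

lemma two_sqrt_one_minus_less:
  fixes r :: real
  assumes "2 * sqrt 2 - 2 < r"
  shows "2 * sqrt (1 - r) < r"
proof -
  have "0 < r"
    using assms by (smt (verit) real_sqrt_ge_one)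
  have "(2 * sqrt 2)\<^sup>2 < (r + 2)\<^sup>2"
    using assms by (intro power_strict_mono) auto
  then have "1 - r < (r / 2)\<^sup>2"
    by (simp add: power2_eq_square algebra_simps)
  then have "sqrt (1 - r) < sqrt ((r / 2)\<^sup>2)"
    by (rule real_sqrt_less_mono)
  then show ?thesis
    using \<open>0 < r\<close> by simp
qed

lemma min_mult_sqrt_det_less:
  fixes a b c :: real
  assumes "a > 0" "b > 0" "c\<^sup>2 < a * b" "2 * sqrt 2 - 2 < c\<^sup>2 / (a * b)"
  shows "2 * min a b * sqrt (a * b - c\<^sup>2) < c\<^sup>2"
proof -
  define r where "r = c\<^sup>2 / (a * b)"
  have "a * b > 0"
    using assms(1,2) by simp
  have det: "a * b - c\<^sup>2 = (a * b) * (1 - r)"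
    using assms(1,2) by (simp add: r_def field_simps)
  have "(min a b)\<^sup>2 \<le> a * b"
    using assms(1,2) by (simp add: power2_eq_square min_def mult_mono)
  then have "min a b \<le> sqrt (a * b)"
    by (simp add: real_le_rsqrt)
  then have "2 * min a b * sqrt (a * b - c\<^sup>2) \<le> 2 * sqrt (a * b) * sqrt (a * b - c\<^sup>2)"
    using assms(3) by (simp add: mult_right_mono)
  also have "\<dots> = 2 * (sqrt (a * b) * sqrt (a * b)) * sqrt (1 - r)"
    unfolding det real_sqrt_mult[of "a * b" "1 - r"] by (simp only: mult_ac)
  also have "\<dots> = (a * b) * (2 * sqrt (1 - r))"
    using \<open>a * b > 0\<close> by simp
  also have "\<dots> < (a * b) * r"
    using two_sqrt_one_minus_less assms(4) \<open>a * b > 0\<close>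
    unfolding r_def[symmetric] by (intro mult_strict_left_mono)
  also have "\<dots> = c\<^sup>2"
    using assms(1,2) by (simp add: r_def)
  finally show ?thesis .
qed

lemma matrix_inv_eqI:
  fixes A B :: "'a::semiring_1^'n^'n"
  assumes "A ** B = mat 1" "B ** A = mat 1"
  shows "matrix_inv A = B"
proof -
  have inv: "A ** matrix_inv A = mat 1 \<and> matrix_inv A ** A = mat 1"
    unfolding matrix_inv_def by (rule someI[of _ B]) (use assms in blast)
  have "matrix_inv A = (B ** A) ** matrix_inv A"
    using assms(2) by simp
  also have "\<dots> = B"
    using inv by (simp flip: matrix_mul_assoc)
  finally show ?thesis .
qed

lemma matrix_inv_2x2:
  fixes Q :: "'a::field^2^2"
  assumes "det Q \<noteq> 0"
  shows "matrix_inv Q = vector [vector [Q$2$2 / det Q, - Q$1$2 / det Q],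
                                vector [- Q$2$1 / det Q, Q$1$1 / det Q]]"
  using assms unfolding det_2
  by (intro matrix_inv_eqI)
     (auto simp: vec_eq_iff forall_2 matrix_matrix_mult_def mat_def sum_2
        diff_divide_distrib[symmetric] add_divide_distrib[symmetric] algebra_simps)

lemma transpose_eq_self_2x2:
  assumes "transpose Q = Q"
  shows "Q$2$1 = Q$1$2"
  using assms by (metis transpose_def vec_lambda_beta)

lemma quadratic_form_2:
  fixes Q :: "real^2^2" and x :: "real^2"
  shows "x \<bullet> (Q *v x) = Q$1$1 * (x$1)\<^sup>2 + (Q$1$2 + Q$2$1) * x$1 * x$2 + Q$2$2 * (x$2)\<^sup>2"
  by (simp add: inner_vec_def matrix_vector_mult_def sum_2 power2_eq_square algebra_simps)

lemma pos_def_mat_diag_pos: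
  assumes "pos_def_mat Q"
  shows "Q$1$1 > 0" "Q$2$2 > 0"
proof -
  have "vector [1, 0] \<noteq> (0::real^2)" "vector [0, 1] \<noteq> (0::real^2)"
    by (simp_all add: vec_eq_iff forall_2)
  then have "0 < vector [1, 0] \<bullet> (Q *v vector [1, 0])" "0 < vector [0, 1] \<bullet> (Q *v vector [0, 1])"
    using assms by (simp_all add: pos_def_mat_def)
  then show "Q$1$1 > 0" "Q$2$2 > 0"
    by (simp_all add: quadratic_form_2)
qed

lemma pos_def_mat_det_pos:
  assumes "transpose Q = Q" "pos_def_mat Q"
  shows "det Q > 0"
proof -
  have "Q$1$1 > 0"
    using pos_def_mat_diag_pos[OF assms(2)] by simp
  define x :: "real^2" where "x = vector [- Q$1$2, Q$1$1]"
  have "x \<noteq> 0"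
    using \<open>Q$1$1 > 0\<close> by (simp add: x_def vec_eq_iff forall_2)
  then have "0 < x \<bullet> (Q *v x)"
    using assms(2) by (simp add: pos_def_mat_def)
  also have "\<dots> = Q$1$1 * det Q"
    using transpose_eq_self_2x2[OF assms(1)]
    by (simp add: quadratic_form_2 x_def det_2 power2_eq_square algebra_simps)
  finally show ?thesis
    using \<open>Q$1$1 > 0\<close> by (simp add: zero_less_mult_iff)
qed

lemma mu_joint_2x2:
  assumes "det Q \<noteq> 0"
  shows "mu_joint Q = (Q$1$1 + Q$2$2) / det Q"
  using assms by (simp add: mu_joint_def matrix_inv_2x2 trace_def sum_2 add_divide_distrib add.commute)

lemma mu1_2x2:
  assumes "det Q \<noteq> 0"
  shows "mu1 Q \<gamma> = Q$2$2 / (\<gamma> * det Q) + 1 / ((1 - \<gamma>) * Q$2$2)"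
  using assms
  by (simp add: mu1_def matrix_inv_2x2 W1_def trace_def matrix_matrix_mult_def sum_2 mult.commute)

lemma mu2_2x2:
  assumes "det Q \<noteq> 0"
  shows "mu2 Q \<gamma> = Q$1$1 / (\<gamma> * det Q) + 1 / ((1 - \<gamma>) * Q$1$1)"
  using assms
  by (simp add: mu2_def matrix_inv_2x2 W2_def trace_def matrix_matrix_mult_def sum_2 mult.commute)

theorem theorem1:
  fixes Q :: "real^2^2"
  assumes "transpose Q = Q"
    and "pos_def_mat Q"
    and "(Q $ 1 $ 2)\<^sup>2 / (Q $ 1 $ 1 * Q $ 2 $ 2) > 2 * sqrt 2 - 2"
  shows "\<exists>\<gamma>::real. 0 < \<gamma> \<and> \<gamma> < 1 \<and> min (mu1 Q \<gamma>) (mu2 Q \<gamma>) < mu_joint Q"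
proof -
  define a b c where "a = Q$1$1" and "b = Q$2$2" and "c = Q$1$2"
  have "a > 0" "b > 0"
    using pos_def_mat_diag_pos[OF assms(2)] by (simp_all add: a_def b_def)
  have "det Q > 0"
    using pos_def_mat_det_pos[OF assms(1,2)] .
  moreover have "det Q = a * b - c\<^sup>2"
    using transpose_eq_self_2x2[OF assms(1)] by (simp add: det_2 a_def b_def c_def power2_eq_square)
  ultimately have less: "2 * min a b * sqrt (det Q) < a * b - det Q"
    using min_mult_sqrt_det_less[of a b c] assms(3) \<open>a > 0\<close> \<open>b > 0\<close> by (simp add: a_def b_def c_def)
  show ?thesis
  proof (cases "b \<le> a")
    case True
    then obtain \<gamma> where "0 < \<gamma>" "\<gamma> < 1"
      "b / (\<gamma> * det Q) + 1 / ((1 - \<gamma>) * b) < (a + b) / det Q"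
      using ex_stepwise_less_joint[of b "det Q" a] less \<open>b > 0\<close> \<open>det Q > 0\<close> by auto
    then show ?thesis
      using \<open>det Q > 0\<close> by (auto simp: mu1_2x2 mu_joint_2x2 a_def b_def min_less_iff_disj)
  next
    case False
    then obtain \<gamma> where "0 < \<gamma>" "\<gamma> < 1"
      "a / (\<gamma> * det Q) + 1 / ((1 - \<gamma>) * a) < (b + a) / det Q"
      using ex_stepwise_less_joint[of a "det Q" b] less \<open>a > 0\<close> \<open>det Q > 0\<close>
      by (auto simp: mult.commute)
    then show ?thesis
      using \<open>det Q > 0\<close> by (auto simp: mu2_2x2 mu_joint_2x2 a_def b_def min_less_iff_disj add.commute)
  qed
qed

end
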